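(* Let $(X,\sigma,\tau)$ be a Lorentzian metric space which is separable, chronologically dense and satisfies the S-property. Then $(\overline{X},\sigma_{chr},\overline{\tau})$ is also a Lorentzian metric space; that is, $\overline{\tau}:\overline{X}\times\overline{X}\to[0,\infty]$ is lower semicontinuous with respect to $\sigma_{chr}$, and $\overline{\tau}(a,c)\geq\overline{\tau}(a,b)+\overline{\tau}(b,c)$ whenever $\overline{\tau}(a,b)>0$ and $\overline{\tau}(b,c)>0$.
   Context: A Lorentzian metric space $(X,\sigma,\tau)$ is a topological space $(X,\sigma)$ together with a function $\tau:X\times X\to[0,\infty]$ which is lower semicontinuous (with respect to the product topology) and satisfies $\tau(x,z)\geq\tau(x,y)+\tau(y,z)$ whenever $\tau(x,y)>0$ and $\tau(y,z)>0$. Write $x\ll y$ iff $\tau(x,y)>0$, $I^+(x)=\{y:x\ll y\}$, $I^-(x)=\{y:y\ll x\}$, and $I^\pm[A]=\bigcup_{a\in A}I^\pm(a)$ for $A\subset X$. A future (resp. past) chain is a sequence $\{x_n\}$ with $x_n\ll x_{n+1}$ (resp. $x_{n+1}\ll x_n$) for all $n$. $X$ is separable if there is a countable $S\subset X$ such that whenever $x\ll y$ there is $s\in S$ with $x\ll s\ll y$. $X$ is chronologically dense if every $x$ with $I^-(x)\neq\emptyset$ is the $\sigma$-limit of some future chain, and every $x$ with $I^+(x)\neq\emptyset$ is the $\sigma$-limit of some past chain. A past set is $P\subset X$ with $P=I^-[P]$; the common past of $S\subset X$ is $\downarrow S=I^-[\{p: p\ll q\ \forall q\in S\}]$. An IP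 (indecomposable past set) is a past set that cannot be written as the union of two proper subsets which are both past sets; a PIP is an IP of the form $I^-(p)$. Future sets, $\uparrow S$, IFs and PIFs are defined dually (exchanging past and future). For a nonempty IP $P$ and a nonempty IF $F$, write $P\sim_S F$ iff $P$ is a maximal IP contained in $\downarrow F$ and $F$ is a maximal IF contained in $\uparrow P$; write $P\sim_S\emptyset$ (resp. $\emptyset\sim_S F$) if the nonempty IP $P$ (resp. nonempty IF $F$) is not S-related to any nonempty IF (resp. IP). $X$ satisfies the S-property if for every $x\in X$, $I^-(x)\sim_S I^+(x)$, no PIF other than $I^+(x)$ is S-related to $I^-(x)$, and no PIP other than $I^-(x)$ is S-related to $I^+(x)$. The c-completion is $\overline{X}=\{(P,F): P\sim_S F\}$ (with $P$ an IP or $\emptyset$, $F$ an IF or $\emptyset$), with $\mathbf{i}(x)=(I^-(x),I^+(x))$ and c-boundary $\partial X=\overline{X}\setminus\mathbf{i}(X)$. For a sequence $\{(P_n,F_n)\}$ in $\overline{X}$, define $L(\{(P_n,F_n)\})$ as the set of $(P,F)\in\overline{X}$ such that: if $P\neq\emptyset$, then $P\subset LI(P_n)$ and $P$ is a maximal IP contained in $LS(P_n)$; and if $F\neq\emptyset$, then $F\subset LI(F_n)$ and $F$ is a maximal IF contained in $LS(F_n)$. Here $LI(A_n)=\bigcup_n\bigcap_{k\geq n}A_k$ and $LS(A_n)=\bigcap_n\bigcup_{k\geq n}A_k$. The chronological topology $\sigma_{chr}$ on $\overline{X}$ is the topology whose closed sets are the $C\subset\overline{X}$ with $L(s)\subset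 C$ for every sequence $s$ in $C$. For $(P,F),(P',F')\in\overline{X}$, $\overline{\tau}((P,F),(P',F'))=0$ if $F=\emptyset$ or $P'=\emptyset$, and otherwise $\overline{\tau}((P,F),(P',F'))=\lim_n\tau(q_n,p'_n)$, where $\{q_n\}$ is a past chain with $F=I^+[\{q_n\}]$ and $\{p'_n\}$ is a future chain with $P'=I^-[\{p'_n\}]$. (In a separable $X$, every nonempty IP is the past of a future chain and every nonempty IF is the future of a past chain; the limit exists and is independent of the chains.) *)

theory Defs
  imports "HOL-Analysis.Analysis" "HOL-Library.Extended_Nonnegative_Real"
begin

definition lsc_on :: "'a topology \<Rightarrow> ('a \<Rightarrow> ennreal) \<Rightarrow> bool" where
  "lsc_on T f \<longleftrightarrow> (\<forall>x\<in>topspace T. \<forall>r. r < f x \<longrightarrow>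
      (\<exists>U. openin T U \<and> x \<in> U \<and> (\<forall>y\<in>U. r < f y)))"

definition lorentzian_metric_space :: "'a topology \<Rightarrow> ('a \<Rightarrow> 'a \<Rightarrow> ennreal) \<Rightarrow> bool" where
  "lorentzian_metric_space T t \<longleftrightarrow>
     lsc_on (prod_topology T T) (\<lambda>(x, y). t x y) \<and>
     (\<forall>x\<in>topspace T. \<forall>y\<in>topspace T. \<forall>z\<in>topspace T.
        0 < t x y \<and> 0 < t y z \<longrightarrow> t x y + t y z \<le> t x z)"

definition chr :: "('a \<Rightarrow> 'a \<Rightarrow> ennreal) \<Rightarrow> 'a \<Rightarrow> 'a \<Rightarrow> bool" where
  "chr t x y \<longleftrightarrow> 0 < t x y"

definition Ifut :: "('a \<Rightarrow> 'a \<Rightarrow> ennreal) \<Rightarrow> 'a \<Rightarrow> 'a set" where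
  "Ifut t x = {y. chr t x y}"

definition Ipast :: "('a \<Rightarrow> 'a \<Rightarrow> ennreal) \<Rightarrow> 'a \<Rightarrow> 'a set" where
  "Ipast t x = {y. chr t y x}"

definition Ifut_set :: "('a \<Rightarrow> 'a \<Rightarrow> ennreal) \<Rightarrow> 'a set \<Rightarrow> 'a set" where
  "Ifut_set t A = (\<Union>a\<in>A. Ifut t a)"

definition Ipast_set :: "('a \<Rightarrow> 'a \<Rightarrow> ennreal) \<Rightarrow> 'a set \<Rightarrow> 'a set" where
  "Ipast_set t A = (\<Union>a\<in>A. Ipast t a)"

definition future_chain :: "('a \<Rightarrow> 'a \<Rightarrow> ennreal) \<Rightarrow> (nat \<Rightarrow> 'a) \<Rightarrow> bool" where
  "future_chain t x \<longleftrightarrow> (\<forall>n. chr t (x n) (x (Suc n)))"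

definition past_chain :: "('a \<Rightarrow> 'a \<Rightarrow> ennreal) \<Rightarrow> (nat \<Rightarrow> 'a) \<Rightarrow> bool" where
  "past_chain t x \<longleftrightarrow> (\<forall>n. chr t (x (Suc n)) (x n))"

definition separable_lms :: "('a \<Rightarrow> 'a \<Rightarrow> ennreal) \<Rightarrow> bool" where
  "separable_lms t \<longleftrightarrow> (\<exists>S. countable S \<and>
      (\<forall>x y. chr t x y \<longrightarrow> (\<exists>s\<in>S. chr t x s \<and> chr t s y)))"

definition chronologically_dense :: "'a topology \<Rightarrow> ('a \<Rightarrow> 'a \<Rightarrow> ennreal) \<Rightarrow> bool" where
  "chronologically_dense T t \<longleftrightarrow>
     (\<forall>x\<in>topspace T. Ipast t x \<noteq> {} \<longrightarrow>
        (\<exists>c. future_chain t c \<and> range c \<subseteq> topspace T \<and> limitin T c x sequentially)) \<and>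
     (\<forall>x\<in>topspace T. Ifut t x \<noteq> {} \<longrightarrow>
        (\<exists>c. past_chain t c \<and> range c \<subseteq> topspace T \<and> limitin T c x sequentially))"

definition past_set :: "('a \<Rightarrow> 'a \<Rightarrow> ennreal) \<Rightarrow> 'a set \<Rightarrow> bool" where
  "past_set t P \<longleftrightarrow> P = Ipast_set t P"

definition future_set :: "('a \<Rightarrow> 'a \<Rightarrow> ennreal) \<Rightarrow> 'a set \<Rightarrow> bool" where
  "future_set t F \<longleftrightarrow> F = Ifut_set t F"

definition common_past :: "('a \<Rightarrow> 'a \<Rightarrow> ennreal) \<Rightarrow> 'a set \<Rightarrow> 'a set" where
  "common_past t S = Ipast_set t {p. \<forall>q\<in>S. chr t p q}"

definition common_future :: "('a \<Rightarrow> 'a \<Rightarrow> ennreal) \<Rightarrow> 'a set \<Rightarrow> 'a set" where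
  "common_future t S = Ifut_set t {p. \<forall>q\<in>S. chr t q p}"

definition IP :: "('a \<Rightarrow> 'a \<Rightarrow> ennreal) \<Rightarrow> 'a set \<Rightarrow> bool" where
  "IP t P \<longleftrightarrow> past_set t P \<and>
     \<not> (\<exists>A B. past_set t A \<and> past_set t B \<and> A \<subset> P \<and> B \<subset> P \<and> P = A \<union> B)"

definition IF :: "('a \<Rightarrow> 'a \<Rightarrow> ennreal) \<Rightarrow> 'a set \<Rightarrow> bool" where
  "IF t F \<longleftrightarrow> future_set t F \<and>
     \<not> (\<exists>A B. future_set t A \<and> future_set t B \<and> A \<subset> F \<and> B \<subset> F \<and> F = A \<union> B)"

definition PIP :: "('a \<Rightarrow> 'a \<Rightarrow> ennreal) \<Rightarrow> 'a set \<Rightarrow> bool" where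
  "PIP t P \<longleftrightarrow> IP t P \<and> (\<exists>p. P = Ipast t p)"

definition PIF :: "('a \<Rightarrow> 'a \<Rightarrow> ennreal) \<Rightarrow> 'a set \<Rightarrow> bool" where
  "PIF t F \<longleftrightarrow> IF t F \<and> (\<exists>p. F = Ifut t p)"

definition maximal_IP_in :: "('a \<Rightarrow> 'a \<Rightarrow> ennreal) \<Rightarrow> 'a set \<Rightarrow> 'a set \<Rightarrow> bool" where
  "maximal_IP_in t P A \<longleftrightarrow> IP t P \<and> P \<subseteq> A \<and>
     (\<forall>P'. IP t P' \<and> P \<subseteq> P' \<and> P' \<subseteq> A \<longrightarrow> P' = P)"

definition maximal_IF_in :: "('a \<Rightarrow> 'a \<Rightarrow> ennreal) \<Rightarrow> 'a set \<Rightarrow> 'a set \<Rightarrow> bool" where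
  "maximal_IF_in t F A \<longleftrightarrow> IF t F \<and> F \<subseteq> A \<and>
     (\<forall>F'. IF t F' \<and> F \<subseteq> F' \<and> F' \<subseteq> A \<longrightarrow> F' = F)"

definition Srel0 :: "('a \<Rightarrow> 'a \<Rightarrow> ennreal) \<Rightarrow> 'a set \<Rightarrow> 'a set \<Rightarrow> bool" where
  "Srel0 t P F \<longleftrightarrow> P \<noteq> {} \<and> F \<noteq> {} \<and> IP t P \<and> IF t F \<and>
     maximal_IP_in t P (common_past t F) \<and> maximal_IF_in t F (common_future t P)"

definition Srel :: "('a \<Rightarrow> 'a \<Rightarrow> ennreal) \<Rightarrow> 'a set \<Rightarrow> 'a set \<Rightarrow> bool" where
  "Srel t P F \<longleftrightarrow> Srel0 t P F \<or>
     (P \<noteq> {} \<and> IP t P \<and> F = {} \<and> \<not> (\<exists>F'. Srel0 t P F')) \<or>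
     (P = {} \<and> F \<noteq> {} \<and> IF t F \<and> \<not> (\<exists>P'. Srel0 t P' F))"

definition S_property :: "('a \<Rightarrow> 'a \<Rightarrow> ennreal) \<Rightarrow> 'a set \<Rightarrow> bool" where
  "S_property t X \<longleftrightarrow> (\<forall>x\<in>X. Srel t (Ipast t x) (Ifut t x) \<and>
      (\<forall>F. PIF t F \<and> Srel t (Ipast t x) F \<longrightarrow> F = Ifut t x) \<and>
      (\<forall>P. PIP t P \<and> Srel t P (Ifut t x) \<longrightarrow> P = Ipast t x))"

definition cbar :: "('a \<Rightarrow> 'a \<Rightarrow> ennreal) \<Rightarrow> ('a set \<times> 'a set) set" where
  "cbar t = {(P, F). Srel t P F}"

definition LI :: "(nat \<Rightarrow> 'a set) \<Rightarrow> 'a set" where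
  "LI A = (\<Union>n. \<Inter>k\<in>{n..}. A k)"

definition LS :: "(nat \<Rightarrow> 'a set) \<Rightarrow> 'a set" where
  "LS A = (\<Inter>n. \<Union>k\<in>{n..}. A k)"

definition Llim :: "('a \<Rightarrow> 'a \<Rightarrow> ennreal) \<Rightarrow> (nat \<Rightarrow> 'a set \<times> 'a set) \<Rightarrow> ('a set \<times> 'a set) set" where
  "Llim t s = {(P, F) \<in> cbar t.
      (P \<noteq> {} \<longrightarrow> P \<subseteq> LI (\<lambda>n. fst (s n)) \<and> maximal_IP_in t P (LS (\<lambda>n. fst (s n)))) \<and>
      (F \<noteq> {} \<longrightarrow> F \<subseteq> LI (\<lambda>n. snd (s n)) \<and> maximal_IF_in t F (LS (\<lambda>n. snd (s n))))}"

text \<open>Chronological topology: closed sets C are those with L(s) \<subseteq> C for every sequence s in C;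
  the open sets are their complements in the c-completion.\<close>
definition chr_topology :: "('a \<Rightarrow> 'a \<Rightarrow> ennreal) \<Rightarrow> ('a set \<times> 'a set) topology" where
  "chr_topology t = topology (\<lambda>U. U \<subseteq> cbar t \<and>
      (\<forall>s. range s \<subseteq> cbar t - U \<longrightarrow> Llim t s \<subseteq> cbar t - U))"

text \<open>Extended time separation; the chains are chosen by Hilbert choice (the value is
  independent of the choice in a separable space).\<close>
definition taubar :: "('a \<Rightarrow> 'a \<Rightarrow> ennreal) \<Rightarrow> ('a set \<times> 'a set) \<Rightarrow> ('a set \<times> 'a set) \<Rightarrow> ennreal" where
  "taubar t a b = (if snd a = {} \<or> fst b = {} then 0 else
     (let q = (SOME q. past_chain t q \<and> snd a = Ifut_set t (range q));
          p = (SOME p. future_chain t p \<and> fst b = Ipast_set t (range p))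
      in lim (\<lambda>n. t (q n) (p n))))"

end

theory Submission
  imports Defs
begin

text \<open>By separability
  every nonempty IF is the future of a past chain q and every nonempty IP the past of a future
  chain p; along such chains \<tau>(q n, p n) increases, so \<tau>-bar is its supremum, and by
  cofinality this supremum does not depend on the chains. If r < \<tau>-bar(a, b), then
  r < \<tau>(q n, p n) for some n, and \<tau>-bar exceeds \<tau>(q n, p n) on the pairs whose IF contains q n
  and whose IP contains p n; these pairs form chronologically open sets because a limit's IP
  and IF lie in the LI of the sequence. For the triangle inequality, every point of the IP of
  b precedes every point of its IF, so along the chains the reverse triangle inequality of \<tau>
  applies across this gap.\<close>

section \<open>Chains in a separable time separation\<close>

lemma SUP_le_SUP_eventually:
  fixes f g :: "nat \<Rightarrow> 'b::complete_lattice"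
  assumes "incseq f" and "eventually (\<lambda>n. f n \<le> g n) sequentially"
  shows "(SUP n. f n) \<le> (SUP n. g n)"
proof (rule SUP_least)
  fix n
  obtain N where N: "\<And>m. m \<ge> N \<Longrightarrow> f m \<le> g m"
    using assms(2) by (auto simp: eventually_sequentially)
  have "f n \<le> f (max n N)" using assms(1) by (simp add: incseq_def)
  also have "\<dots> \<le> g (max n N)" by (rule N) simp
  also have "\<dots> \<le> (SUP n. g n)" by (rule SUP_upper) simp
  finally show "f n \<le> (SUP n. g n)" .
qed

lemma incseq_eventually_less_SUP:
  fixes f :: "nat \<Rightarrow> 'b::complete_linorder"
  assumes "incseq f" and "c < (SUP n. f n)"
  shows "eventually (\<lambda>n. c < f n) sequentially"
proof -
  obtain N where "c < f N" using assms(2) by (auto simp: less_SUP_iff)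
  then show ?thesis
    using assms(1) by (auto simp: eventually_sequentially incseq_def intro: less_le_trans)
qed

locale time_separation =
  fixes t :: "'a \<Rightarrow> 'a \<Rightarrow> ennreal"
  assumes reverse_triangle: "0 < t x y \<Longrightarrow> 0 < t y z \<Longrightarrow> t x y + t y z \<le> t x z"
begin

lemma tau_le_extend_right: "0 < t x y \<Longrightarrow> chr t y z \<Longrightarrow> t x y \<le> t x z"
  using reverse_triangle[of x y z] order_trans[OF add_increasing2[OF zero_le order_refl]]
  by (auto simp: chr_def)

lemma tau_le_extend_left: "chr t x y \<Longrightarrow> 0 < t y z \<Longrightarrow> t y z \<le> t x z"
  using reverse_triangle[of x y z] order_trans[OF add_increasing[OF zero_le order_refl]]
  by (auto simp: chr_def)

lemma chr_trans: "chr t x y \<Longrightarrow> chr t y z \<Longrightarrow> chr t x z"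
  using tau_le_extend_right by (fastforce simp: chr_def intro: less_le_trans)

lemma tau_chr_mono:
  assumes "chr t x' x" and "chr t y y'"
  shows "t x y \<le> t x' y'"
proof (cases "t x y = 0")
  case False
  then have xy: "0 < t x y" by (simp add: zero_less_iff_neq_zero)
  then have "t x y \<le> t x y'" using assms(2) by (rule tau_le_extend_right)
  also have "\<dots> \<le> t x' y'"
    using assms(1) xy calculation by (auto intro: tau_le_extend_left less_le_trans)
  finally show ?thesis .
qed simp

lemma reverse_triangle_gap:
  assumes "0 < t w x" and "chr t x y" and "0 < t y z"
  shows "t w x + t y z \<le> t w z"
proof -
  have "t y z \<le> t x z" using assms(2,3) by (rule tau_le_extend_left)
  then have "t w x + t y z \<le> t w x + t x z" by (rule add_left_mono)
  also have "\<dots> \<le> t w z" using assms(1,3) \<open>t y z \<le> t x z\<close> by (intro reverse_triangle) auto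
  finally show ?thesis .
qed

lemma past_chain_chr:
  assumes "past_chain t q" and "m < n"
  shows "chr t (q n) (q m)"
  using assms(2)
  by (induction m n rule: less_Suc_induct) (use assms(1) in \<open>auto simp: past_chain_def intro: chr_trans\<close>)

lemma future_chain_chr:
  assumes "future_chain t p" and "m < n"
  shows "chr t (p m) (p n)"
  using assms(2)
  by (induction m n rule: less_Suc_induct) (use assms(1) in \<open>auto simp: future_chain_def intro: chr_trans\<close>)

lemma past_chain_in_Ifut_set: "past_chain t q \<Longrightarrow> q n \<in> Ifut_set t (range q)"
  unfolding past_chain_def Ifut_set_def Ifut_def by blast

lemma future_chain_in_Ipast_set: "future_chain t p \<Longrightarrow> p n \<in> Ipast_set t (range p)"
  unfolding future_chain_def Ipast_set_def Ipast_def by blast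

lemma incseq_tau_chains: "past_chain t q \<Longrightarrow> future_chain t p \<Longrightarrow> incseq (\<lambda>n. t (q n) (p n))"
  by (intro incseq_SucI tau_chr_mono) (auto simp: past_chain_def future_chain_def)

lemma tau_le_SUP_chains:
  assumes q: "past_chain t q" and p: "future_chain t p"
    and x: "x \<in> Ifut_set t (range q)" and y: "y \<in> Ipast_set t (range p)"
  shows "t x y \<le> (SUP n. t (q n) (p n))"
proof -
  obtain m k where m: "chr t (q m) x" and k: "chr t y (p k)"
    using x y by (auto simp: Ifut_set_def Ifut_def Ipast_set_def Ipast_def)
  let ?j = "Suc (m + k)"
  have "chr t (q ?j) x" using past_chain_chr[OF q, of m ?j] m by (auto intro: chr_trans)
  moreover have "chr t y (p ?j)" using future_chain_chr[OF p, of k ?j] k by (auto intro: chr_trans)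
  ultimately have "t x y \<le> t (q ?j) (p ?j)" by (rule tau_chr_mono)
  also have "\<dots> \<le> (SUP n. t (q n) (p n))" by (rule SUP_upper) simp
  finally show ?thesis .
qed

lemma taubar_eq_SUP:
  assumes q: "past_chain t q" "snd a = Ifut_set t (range q)"
    and p: "future_chain t p" "fst b = Ipast_set t (range p)"
  shows "taubar t a b = (SUP n. t (q n) (p n))"
proof -
  define q0 where "q0 = (SOME q. past_chain t q \<and> snd a = Ifut_set t (range q))"
  define p0 where "p0 = (SOME p. future_chain t p \<and> fst b = Ipast_set t (range p))"
  have q0: "past_chain t q0" "snd a = Ifut_set t (range q0)"
    using someI[of "\<lambda>q. past_chain t q \<and> snd a = Ifut_set t (range q)", OF conjI[OF q]]
    by (simp_all add: q0_def)
  have p0: "future_chain t p0" "fst b = Ipast_set t (range p0)"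
    using someI[of "\<lambda>p. future_chain t p \<and> fst b = Ipast_set t (range p)", OF conjI[OF p]]
    by (simp_all add: p0_def)
  have "snd a \<noteq> {}" "fst b \<noteq> {}"
    using past_chain_in_Ifut_set[OF q(1)] future_chain_in_Ipast_set[OF p(1)] q(2) p(2) by auto
  then have "taubar t a b = lim (\<lambda>n. t (q0 n) (p0 n))"
    by (simp add: taubar_def q0_def p0_def Let_def)
  also have "\<dots> = (SUP n. t (q0 n) (p0 n))"
    by (rule limI[OF LIMSEQ_SUP[OF incseq_tau_chains[OF q0(1) p0(1)]]])
  also have "\<dots> = (SUP n. t (q n) (p n))"
  proof (rule antisym; rule SUP_least)
    fix n
    show "t (q0 n) (p0 n) \<le> (SUP n. t (q n) (p n))"
      using past_chain_in_Ifut_set[OF q0(1)] future_chain_in_Ipast_set[OF p0(1)] q0 p0 q p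
      by (intro tau_le_SUP_chains) auto
    show "t (q n) (p n) \<le> (SUP n. t (q0 n) (p0 n))"
      using past_chain_in_Ifut_set[OF q(1)] future_chain_in_Ipast_set[OF p(1)] q0 p0 q p
      by (intro tau_le_SUP_chains) auto
  qed
  finally show ?thesis .
qed

end

locale separable_time_separation = time_separation +
  assumes separable: "separable_lms t"
begin

lemma future_set_Ifut_set: "future_set t (Ifut_set t A)"
  unfolding future_set_def
proof
  show "Ifut_set t A \<subseteq> Ifut_set t (Ifut_set t A)"
  proof
    fix y assume "y \<in> Ifut_set t A"
    then obtain a where a: "a \<in> A" "chr t a y" by (auto simp: Ifut_set_def Ifut_def)
    then obtain s where "chr t a s" "chr t s y" using separable by (auto simp: separable_lms_def)
    with a show "y \<in> Ifut_set t (Ifut_set t A)" by (auto simp: Ifut_set_def Ifut_def)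
  qed
  show "Ifut_set t (Ifut_set t A) \<subseteq> Ifut_set t A"
    by (auto simp: Ifut_set_def Ifut_def intro: chr_trans)
qed

text \<open>Otherwise F would split into the futures of its points inside and outside of I^-(p).\<close>
lemma IF_directed:
  assumes F: "IF t F" and "p \<in> F" "q \<in> F"
  shows "\<exists>r\<in>F. chr t r p \<and> chr t r q"
proof (rule ccontr)
  assume no_common: "\<not> ?thesis"
  have F_eq: "F = Ifut_set t F" using F by (simp add: IF_def future_set_def)
  define A where "A = Ifut_set t (F \<inter> Ipast t p)"
  define B where "B = Ifut_set t (F - Ipast t p)"
  have "F = A \<union> B" "A \<subseteq> F" "B \<subseteq> F"
    using F_eq by (auto simp: A_def B_def Ifut_set_def)
  moreover have "q \<notin> A" "p \<notin> B"
    using no_common by (auto simp: A_def B_def Ifut_set_def Ifut_def Ipast_def)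
  ultimately have "A \<subset> F" "B \<subset> F" "F = A \<union> B" using assms(2,3) by auto
  moreover have "future_set t A" "future_set t B"
    by (simp_all add: A_def B_def future_set_Ifut_set)
  ultimately show False using F unfolding IF_def by blast
qed

lemma future_set_countable_coinitial:
  assumes "future_set t F"
  obtains D where "countable D" "D \<subseteq> F" "\<And>y. y \<in> F \<Longrightarrow> \<exists>s\<in>D. chr t s y"
proof -
  obtain S where S: "countable S" "\<And>x y. chr t x y \<Longrightarrow> \<exists>s\<in>S. chr t x s \<and> chr t s y"
    using separable unfolding separable_lms_def by blast
  have "\<exists>s\<in>S \<inter> F. chr t s y" if "y \<in> F" for y
  proof -
    obtain x where "x \<in> F" "chr t x y"
      using assms \<open>y \<in> F\<close> by (auto simp: future_set_def Ifut_set_def Ifut_def)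
    moreover from S(2)[OF this(2)] obtain s where "s \<in> S" "chr t x s" "chr t s y" by blast
    ultimately show ?thesis
      using assms by (subst (asm) future_set_def) (auto simp: Ifut_set_def Ifut_def)
  qed
  with S(1) show thesis by (intro that[of "S \<inter> F"]) auto
qed

text \<open>The chain steps below the previous point and the n-th point of a countable coinitial
  subset, which directedness permits.\<close>
lemma IF_past_chain:
  assumes F: "IF t F" and "F \<noteq> {}"
  obtains q where "past_chain t q" "F = Ifut_set t (range q)"
proof -
  have F_future: "future_set t F" using F by (simp add: IF_def)
  obtain D where D: "countable D" "D \<subseteq> F" "\<And>y. y \<in> F \<Longrightarrow> \<exists>s\<in>D. chr t s y"
    using future_set_countable_coinitial[OF F_future] by blast
  obtain f0 where f0: "f0 \<in> F" using \<open>F \<noteq> {}\<close> by blast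
  then have "D \<noteq> {}" using D(3) by blast
  define e where "e = from_nat_into D"
  have e: "e n \<in> F" for n using D(2) from_nat_into[OF \<open>D \<noteq> {}\<close>] by (auto simp: e_def)
  obtain g where g: "\<And>x y. x \<in> F \<Longrightarrow> y \<in> F \<Longrightarrow> g x y \<in> F \<and> chr t (g x y) x \<and> chr t (g x y) y"
    using IF_directed[OF F] by metis
  define q where "q = rec_nat f0 (\<lambda>n x. g x (e n))"
  have q_Suc: "q (Suc n) = g (q n) (e n)" for n by (simp add: q_def)
  have qF: "q n \<in> F" for n
    by (induction n) (use f0 g e in \<open>auto simp: q_def\<close>)
  have below_e: "chr t (q (Suc n)) (e n)" for n using g qF e by (simp add: q_Suc)
  have "past_chain t q" unfolding past_chain_def using g qF e by (simp add: q_Suc)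
  moreover have "F = Ifut_set t (range q)"
  proof
    have "Ifut_set t (range q) \<subseteq> Ifut_set t F" using qF by (auto simp: Ifut_set_def)
    then show "Ifut_set t (range q) \<subseteq> F" using F_future by (metis future_set_def)
    show "F \<subseteq> Ifut_set t (range q)"
    proof
      fix y assume "y \<in> F"
      then obtain s where "s \<in> D" "chr t s y" using D(3) by blast
      moreover then obtain n where "e n = s" using D(1) from_nat_into_surj e_def by metis
      ultimately have "chr t (q (Suc n)) y" using below_e chr_trans by blast
      then show "y \<in> Ifut_set t (range q)" by (auto simp: Ifut_set_def Ifut_def)
    qed
  qed
  ultimately show thesis by (rule that)
qed

end

definition time_dual :: "('a \<Rightarrow> 'a \<Rightarrow> ennreal) \<Rightarrow> 'a \<Rightarrow> 'a \<Rightarrow> ennreal" where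
  "time_dual t x y = t y x"

lemma time_dual_simps:
  "Ifut_set (time_dual t) A = Ipast_set t A"
  "past_chain (time_dual t) p \<longleftrightarrow> future_chain t p"
  "IF (time_dual t) P \<longleftrightarrow> IP t P"
  by (auto simp: chr_def time_dual_def Ifut_set_def Ipast_set_def Ifut_def Ipast_def
      past_chain_def future_chain_def IF_def IP_def future_set_def past_set_def)

lemma separable_lms_time_dual: "separable_lms t \<Longrightarrow> separable_lms (time_dual t)"
  unfolding separable_lms_def chr_def time_dual_def by metis

lemma (in separable_time_separation) separable_time_separation_dual:
  "separable_time_separation (time_dual t)"
proof
  show "time_dual t x y + time_dual t y z \<le> time_dual t x z"
    if "0 < time_dual t x y" "0 < time_dual t y z" for x y z
    using reverse_triangle[of z y x] that by (simp add: time_dual_def add.commute)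
  show "separable_lms (time_dual t)" using separable by (rule separable_lms_time_dual)
qed

lemma (in separable_time_separation) IP_future_chain:
  assumes "IP t P" and "P \<noteq> {}"
  obtains p where "future_chain t p" "P = Ipast_set t (range p)"
  using separable_time_separation.IF_past_chain[OF separable_time_separation_dual] assms
  unfolding time_dual_simps by blast

section \<open>The chronological topology\<close>

lemma LI_subseq:
  assumes "strict_mono r"
  shows "LI A \<subseteq> LI (A \<circ> r)"
proof
  fix x assume "x \<in> LI A"
  then obtain n where n: "\<And>k. k \<ge> n \<Longrightarrow> x \<in> A k" by (auto simp: LI_def)
  have "x \<in> A (r k)" if "k \<ge> n" for k using n[of "r k"] seq_suble[OF assms, of k] that by simp
  then show "x \<in> LI (A \<circ> r)" by (auto simp: LI_def)
qed

lemma LS_subseq: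
  assumes "strict_mono r"
  shows "LS (A \<circ> r) \<subseteq> LS A"
proof
  fix x assume x: "x \<in> LS (A \<circ> r)"
  show "x \<in> LS A" unfolding LS_def
  proof
    fix n
    obtain k where "k \<ge> n" "x \<in> A (r k)" using x by (auto simp: LS_def)
    then show "x \<in> (\<Union>k\<in>{n..}. A k)" using seq_suble[OF assms, of k] by auto
  qed
qed

lemma LI_subset_LS: "LI A \<subseteq> LS A"
proof
  fix x assume "x \<in> LI A"
  then obtain n where n: "\<And>k. k \<ge> n \<Longrightarrow> x \<in> A k" by (auto simp: LI_def)
  have "x \<in> (\<Union>k\<in>{m..}. A k)" for m using n[of "max n m"] by auto
  then show "x \<in> LS A" by (simp add: LS_def)
qed

lemma maximal_IP_in_subset:
  "maximal_IP_in t P A \<Longrightarrow> P \<subseteq> B \<Longrightarrow> B \<subseteq> A \<Longrightarrow> maximal_IP_in t P B"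
  unfolding maximal_IP_in_def by blast

lemma maximal_IF_in_subset:
  "maximal_IF_in t F A \<Longrightarrow> F \<subseteq> B \<Longrightarrow> B \<subseteq> A \<Longrightarrow> maximal_IF_in t F B"
  unfolding maximal_IF_in_def by blast

lemma subset_LI_subseq:
  assumes "strict_mono r" and "X \<subseteq> LI A"
  shows "X \<subseteq> LI (\<lambda>n. A (r n))" and "X \<subseteq> LS (\<lambda>n. A (r n))" and "LS (\<lambda>n. A (r n)) \<subseteq> LS A"
  using assms LI_subseq[OF assms(1), of A] LS_subseq[OF assms(1), of A] LI_subset_LS[of "A \<circ> r"]
  by (auto simp: comp_def)

lemma Llim_subseq:
  assumes r: "strict_mono r"
  shows "Llim t s \<subseteq> Llim t (s \<circ> r)"
proof
  fix z assume "z \<in> Llim t s"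
  then obtain P F where z: "z = (P, F)" "(P, F) \<in> cbar t"
    and P: "P \<noteq> {} \<Longrightarrow> P \<subseteq> LI (\<lambda>n. fst (s n)) \<and> maximal_IP_in t P (LS (\<lambda>n. fst (s n)))"
    and F: "F \<noteq> {} \<Longrightarrow> F \<subseteq> LI (\<lambda>n. snd (s n)) \<and> maximal_IF_in t F (LS (\<lambda>n. snd (s n)))"
    by (auto simp: Llim_def)
  have "P \<subseteq> LI (\<lambda>n. fst (s (r n))) \<and> maximal_IP_in t P (LS (\<lambda>n. fst (s (r n))))"
    if "P \<noteq> {}"
    using P[OF that] subset_LI_subseq[OF r, of P "\<lambda>n. fst (s n)"] maximal_IP_in_subset by blast
  moreover have "F \<subseteq> LI (\<lambda>n. snd (s (r n))) \<and> maximal_IF_in t F (LS (\<lambda>n. snd (s (r n))))"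
    if "F \<noteq> {}"
    using F[OF that] subset_LI_subseq[OF r, of F "\<lambda>n. snd (s n)"] maximal_IF_in_subset by blast
  ultimately show "z \<in> Llim t (s \<circ> r)" using z by (simp add: Llim_def)
qed

lemma Llim_subset_cbar: "Llim t s \<subseteq> cbar t"
  by (auto simp: Llim_def)

lemma Llim_fst_subset_LI: "z \<in> Llim t s \<Longrightarrow> fst z \<subseteq> LI (\<lambda>n. fst (s n))"
  by (cases "fst z = {}") (auto simp: Llim_def)

lemma Llim_snd_subset_LI: "z \<in> Llim t s \<Longrightarrow> snd z \<subseteq> LI (\<lambda>n. snd (s n))"
  by (cases "snd z = {}") (auto simp: Llim_def)

definition chr_open :: "('a \<Rightarrow> 'a \<Rightarrow> ennreal) \<Rightarrow> ('a set \<times> 'a set) set \<Rightarrow> bool" where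
  "chr_open t U \<longleftrightarrow> U \<subseteq> cbar t \<and>
     (\<forall>s. range s \<subseteq> cbar t - U \<longrightarrow> Llim t s \<subseteq> cbar t - U)"

lemma chr_open_Llim_frequently_outside:
  assumes U: "chr_open t U" and s: "range s \<subseteq> cbar t" and inf: "infinite {n. s n \<notin> U}"
  shows "Llim t s \<inter> U = {}"
proof -
  obtain r :: "nat \<Rightarrow> nat" where r: "strict_mono r" "\<And>n. r n \<in> {n. s n \<notin> U}"
    using infinite_enumerate[OF inf] by blast
  then have "range (s \<circ> r) \<subseteq> cbar t - U" using s by auto
  with U have "Llim t (s \<circ> r) \<subseteq> cbar t - U" unfolding chr_open_def by blast
  then show ?thesis using Llim_subseq[OF r(1)] by blast
qed

lemma istopology_chr_open: "istopology (chr_open t)"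
  unfolding istopology_def
proof (intro conjI allI impI)
  fix S T assume S: "chr_open t S" and T: "chr_open t T"
  show "chr_open t (S \<inter> T)" unfolding chr_open_def
  proof (intro conjI allI impI)
    show "S \<inter> T \<subseteq> cbar t" using S by (auto simp: chr_open_def)
    fix s :: "nat \<Rightarrow> 'a set \<times> 'a set" assume s: "range s \<subseteq> cbar t - S \<inter> T"
    have "{n. s n \<notin> S} \<union> {n. s n \<notin> T} = UNIV" using s by auto
    then have "infinite {n. s n \<notin> S} \<or> infinite {n. s n \<notin> T}"
      by (metis finite_Un infinite_UNIV_nat)
    then show "Llim t s \<subseteq> cbar t - S \<inter> T"
      using chr_open_Llim_frequently_outside[OF S, of s] chr_open_Llim_frequently_outside[OF T, of s]
        s Llim_subset_cbar by blast
  qed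
next
  fix K assume K: "\<forall>S\<in>K. chr_open t S"
  show "chr_open t (\<Union>K)" unfolding chr_open_def
  proof (intro conjI allI impI)
    show "\<Union>K \<subseteq> cbar t" using K by (auto simp: chr_open_def)
    fix s :: "nat \<Rightarrow> 'a set \<times> 'a set" assume s: "range s \<subseteq> cbar t - \<Union>K"
    have "Llim t s \<subseteq> cbar t - S" if "S \<in> K" for S
      using K that s unfolding chr_open_def by blast
    then show "Llim t s \<subseteq> cbar t - \<Union>K" using Llim_subset_cbar by blast
  qed
qed

lemma openin_chr_topology: "openin (chr_topology t) = chr_open t"
proof -
  have "chr_topology t = topology (chr_open t)"
    unfolding chr_topology_def chr_open_def ..
  then show ?thesis using topology_inverse'[OF istopology_chr_open] by simp
qed

lemma topspace_chr_topology: "topspace (chr_topology t) = cbar t"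
proof -
  have "chr_open t (cbar t)" by (auto simp: chr_open_def)
  moreover have "U \<subseteq> cbar t" if "chr_open t U" for U using that by (simp add: chr_open_def)
  ultimately show ?thesis unfolding topspace_def openin_chr_topology by blast
qed

lemma openin_chr_topology_component:
  assumes Llim_LI: "\<And>z s. z \<in> Llim t s \<Longrightarrow> g z \<subseteq> LI (\<lambda>n. g (s n))"
  shows "openin (chr_topology t) {a \<in> cbar t. x \<in> g a}"
  unfolding openin_chr_topology chr_open_def
proof (intro conjI allI impI subsetI)
  fix s z assume s: "range s \<subseteq> cbar t - {a \<in> cbar t. x \<in> g a}" and z: "z \<in> Llim t s"
  have "x \<notin> LI (\<lambda>n. g (s n))" using s by (auto simp: LI_def)
  then show "z \<in> cbar t - {a \<in> cbar t. x \<in> g a}"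
    using Llim_LI[OF z] z Llim_subset_cbar by blast
qed auto

section \<open>The extended time separation\<close>

lemma cbar_snd_IF: "a \<in> cbar t \<Longrightarrow> snd a \<noteq> {} \<Longrightarrow> IF t (snd a)"
  by (cases a) (auto simp: cbar_def Srel_def Srel0_def)

lemma cbar_fst_IP: "a \<in> cbar t \<Longrightarrow> fst a \<noteq> {} \<Longrightarrow> IP t (fst a)"
  by (cases a) (auto simp: cbar_def Srel_def Srel0_def)

lemma taubar_eq_0: "snd a = {} \<or> fst b = {} \<Longrightarrow> taubar t a b = 0"
  by (simp add: taubar_def)

lemma (in time_separation) cbar_fst_chr_snd:
  assumes "a \<in> cbar t" and x: "x \<in> fst a" and y: "y \<in> snd a"
  shows "chr t x y"
proof -
  have "Srel0 t (fst a) (snd a)" using assms by (cases a) (auto simp: cbar_def Srel_def)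
  then have "x \<in> common_past t (snd a)" using x by (auto simp: Srel0_def maximal_IP_in_def)
  then obtain w where "chr t x w" "\<forall>y\<in>snd a. chr t w y"
    by (auto simp: common_past_def Ipast_set_def Ipast_def)
  with y show ?thesis by (blast intro: chr_trans)
qed

context separable_time_separation
begin

lemma cbar_snd_past_chain:
  assumes "a \<in> cbar t" and "snd a \<noteq> {}"
  obtains q where "past_chain t q" "snd a = Ifut_set t (range q)"
  using IF_past_chain[OF cbar_snd_IF[OF assms] assms(2)] .

lemma cbar_fst_future_chain:
  assumes "a \<in> cbar t" and "fst a \<noteq> {}"
  obtains p where "future_chain t p" "fst a = Ipast_set t (range p)"
  using IP_future_chain[OF cbar_fst_IP[OF assms] assms(2)] .

lemma tau_le_taubar:
  assumes "a \<in> cbar t" "b \<in> cbar t" and "x \<in> snd a" "y \<in> fst b"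
  shows "t x y \<le> taubar t a b"
proof -
  obtain q where q: "past_chain t q" "snd a = Ifut_set t (range q)"
    using cbar_snd_past_chain assms(1,3) by blast
  obtain p where p: "future_chain t p" "fst b = Ipast_set t (range p)"
    using cbar_fst_future_chain assms(2,4) by blast
  show ?thesis
    using tau_le_SUP_chains[OF q(1) p(1)] assms(3,4) q(2) p(2) taubar_eq_SUP[OF q p] by simp
qed

lemma taubar_lower_neighbourhoods:
  assumes a: "a \<in> cbar t" and b: "b \<in> cbar t" and r: "r < taubar t a b"
  obtains U V where "openin (chr_topology t) U" "openin (chr_topology t) V" "a \<in> U" "b \<in> V"
    "\<And>a' b'. a' \<in> U \<Longrightarrow> b' \<in> V \<Longrightarrow> r < taubar t a' b'"
proof -
  have "snd a \<noteq> {}" "fst b \<noteq> {}" using r taubar_eq_0[of a b t] by auto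
  then obtain q p where q: "past_chain t q" "snd a = Ifut_set t (range q)"
    and p: "future_chain t p" "fst b = Ipast_set t (range p)"
    using cbar_snd_past_chain[OF a] cbar_fst_future_chain[OF b] by metis
  obtain n where n: "r < t (q n) (p n)"
    using r taubar_eq_SUP[OF q p] by (auto simp: less_SUP_iff)
  show thesis
  proof (rule that)
    show "openin (chr_topology t) {a' \<in> cbar t. q n \<in> snd a'}"
      by (rule openin_chr_topology_component[OF Llim_snd_subset_LI])
    show "openin (chr_topology t) {b' \<in> cbar t. p n \<in> fst b'}"
      by (rule openin_chr_topology_component[OF Llim_fst_subset_LI])
    show "a \<in> {a' \<in> cbar t. q n \<in> snd a'}" using a q past_chain_in_Ifut_set by auto
    show "b \<in> {b' \<in> cbar t. p n \<in> fst b'}" using b p future_chain_in_Ipast_set by auto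
    show "r < taubar t a' b'"
      if "a' \<in> {a' \<in> cbar t. q n \<in> snd a'}" "b' \<in> {b' \<in> cbar t. p n \<in> fst b'}" for a' b'
      using n tau_le_taubar[of a' b' "q n" "p n"] that by (auto intro: less_le_trans)
  qed
qed

lemma lsc_taubar: "lsc_on (prod_topology (chr_topology t) (chr_topology t)) (\<lambda>(a, b). taubar t a b)"
  unfolding lsc_on_def
proof (intro ballI allI impI)
  fix z r
  assume "z \<in> topspace (prod_topology (chr_topology t) (chr_topology t))"
    and "r < (case z of (a, b) \<Rightarrow> taubar t a b)"
  then obtain a b where z: "z = (a, b)" "a \<in> cbar t" "b \<in> cbar t" "r < taubar t a b"
    by (cases z) (auto simp: topspace_chr_topology)
  obtain U V where "openin (chr_topology t) U" "openin (chr_topology t) V" "a \<in> U" "b \<in> V"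
    and UV: "\<And>a' b'. a' \<in> U \<Longrightarrow> b' \<in> V \<Longrightarrow> r < taubar t a' b'"
    using taubar_lower_neighbourhoods[OF z(2-4)] by blast
  then have "openin (prod_topology (chr_topology t) (chr_topology t)) (U \<times> V)" "z \<in> U \<times> V"
    using z by (simp_all add: openin_prod_Times_iff)
  with UV show "\<exists>W. openin (prod_topology (chr_topology t) (chr_topology t)) W \<and> z \<in> W \<and>
      (\<forall>w\<in>W. r < (case w of (a, b) \<Rightarrow> taubar t a b))"
    by (intro exI[of _ "U \<times> V"]) auto
qed

lemma taubar_reverse_triangle:
  assumes a: "a \<in> cbar t" and b: "b \<in> cbar t" and c: "c \<in> cbar t"
    and ab: "0 < taubar t a b" and bc: "0 < taubar t b c"
  shows "taubar t a b + taubar t b c \<le> taubar t a c"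
proof -
  have "snd a \<noteq> {}" "fst b \<noteq> {}" "snd b \<noteq> {}" "fst c \<noteq> {}"
    using ab bc taubar_eq_0 by (metis less_irrefl)+
  then obtain qa pb qb pc
    where qa: "past_chain t qa" "snd a = Ifut_set t (range qa)"
      and pb: "future_chain t pb" "fst b = Ipast_set t (range pb)"
      and qb: "past_chain t qb" "snd b = Ifut_set t (range qb)"
      and pc: "future_chain t pc" "fst c = Ipast_set t (range pc)"
    using cbar_snd_past_chain[OF a] cbar_fst_future_chain[OF b]
      cbar_snd_past_chain[OF b] cbar_fst_future_chain[OF c] by metis
  define A where "A = (\<lambda>n. t (qa n) (pb n))"
  define B where "B = (\<lambda>n. t (qb n) (pc n))"
  define C where "C = (\<lambda>n. t (qa n) (pc n))"
  have A: "incseq A" "taubar t a b = (SUP n. A n)"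
    using incseq_tau_chains[OF qa(1) pb(1)] taubar_eq_SUP[OF qa pb] by (simp_all add: A_def)
  have B: "incseq B" "taubar t b c = (SUP n. B n)"
    using incseq_tau_chains[OF qb(1) pc(1)] taubar_eq_SUP[OF qb pc] by (simp_all add: B_def)
  have C: "taubar t a c = (SUP n. C n)"
    using taubar_eq_SUP[OF qa pc] by (simp add: C_def)
  have "eventually (\<lambda>n. 0 < A n) sequentially" "eventually (\<lambda>n. 0 < B n) sequentially"
    using incseq_eventually_less_SUP A B ab bc by simp_all
  then have "eventually (\<lambda>n. A n + B n \<le> C n) sequentially"
  proof eventually_elim
    case (elim n)
    have "chr t (pb n) (qb n)"
      using cbar_fst_chr_snd[OF b] future_chain_in_Ipast_set[OF pb(1)] past_chain_in_Ifut_set[OF qb(1)]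
        pb(2) qb(2) by simp
    then show ?case using reverse_triangle_gap elim by (simp add: A_def B_def C_def)
  qed
  moreover have "incseq (\<lambda>n. A n + B n)"
    using A(1) B(1) by (simp add: incseq_def add_mono)
  ultimately have "(SUP n. A n + B n) \<le> (SUP n. C n)" by (intro SUP_le_SUP_eventually)
  then show ?thesis using ennreal_SUP_add[OF A(1) B(1)] A(2) B(2) C by simp
qed

end

theorem mainTheorem1:
  fixes \<sigma> :: "'a topology" and \<tau> :: "'a \<Rightarrow> 'a \<Rightarrow> ennreal"
  assumes "lorentzian_metric_space \<sigma> \<tau>"
    and "topspace \<sigma> = UNIV"
    and "separable_lms \<tau>"
    and "chronologically_dense \<sigma> \<tau>"
    and "S_property \<tau> (topspace \<sigma>)"
  shows "lorentzian_metric_space (chr_topology \<tau>) (taubar \<tau>)"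
proof -
  interpret separable_time_separation \<tau>
  proof
    show "\<tau> x y + \<tau> y z \<le> \<tau> x z" if "0 < \<tau> x y" "0 < \<tau> y z" for x y z
      using assms(1,2) that unfolding lorentzian_metric_space_def by blast
  qed (rule assms(3))
  show ?thesis
    unfolding lorentzian_metric_space_def topspace_chr_topology
    using lsc_taubar taubar_reverse_triangle by blast
qed

end
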